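(* Let $u\in\Sigma$, $\sigma\in\Sigma^+$ and $i,j\in\mathbb N$ with $u\ne\sigma[0]$. If $\langle\{u^i\cdot\sigma\},\{u^j\cdot\sigma\}\rangle$ has a deduction tree, then every (in particular the minimal) deduction tree of it has size at least $\min(i,j)+1$.
   Context: Let $AP$ be a finite set of atomic propositions and $\Sigma=2^{AP}$; $\sigma[0]$ is the first letter of $\sigma$ and $u^i$ is the word consisting of $i$ copies of the letter $u$. For $\sigma=w_0\cdots w_m\in\Sigma^+$ and $j\le m$, $\sigma^{(j)}=w_j\cdots w_m$. For $A\subseteq\Sigma^+$: $A^{\mathsf X}=\{\sigma^{(1)}:\sigma\in A,|\sigma|\ge2\}$; $A^{\mathsf G}=\{\sigma^{(j)}:\sigma\in A,0\le j<|\sigma|\}$; a future point for $A$ is $f:A\to\mathbb N$ with $f(\sigma)<|\sigma|$, and $A^f=\{\sigma^{(f(\sigma))}:\sigma\in A\}$. For a literal $\alpha\in\{p,\neg p:p\in AP\}$, $A\models\alpha$ means $\alpha$ holds at position $0$ of every trace in $A$; $B\perp\alpha$ means it fails at position $0$ of every trace in $B$. Proof system on terms $\langle A,B\rangle$: Atomic: $\langle A,B\rangle$ if $A\models\alpha$, $B\perp\alpha$ for a literal $\alpha$; Or: $\langle A_1\uplus A_2,B\rangle$ from $\langle A_1,B\rangle,\langle A_2,B\rangle$; And: $\langle A,B_1\uplus B_2\rangle$ from $\langle A,B_1\rangle,\langle A,B_2\rangle$; Next: $\langle A,B\rangle$ from $\langle A^{\mathsf X},B^{\mathsf X}\rangle$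 if $|A^{\mathsf X}|=|A|$; WeakNext: $\langle A,B\rangle$ from $\langle A^{\mathsf X},B^{\mathsf X}\rangle$ if $|B^{\mathsf X}|=|B|$; Future: $\langle A,B\rangle$ from $\langle A^f,B^{\mathsf G}\rangle$, $f$ a future point for $A$; Globally: $\langle A,B\rangle$ from $\langle A^{\mathsf G},B^f\rangle$, $f$ a future point for $B$ ($\uplus$ = disjoint union). A deduction tree for $\langle A,B\rangle$ is a finite tree of rule applications rooted at $\langle A,B\rangle$ with all hypotheses derived; its size is its number of rule applications. *)

theory Defs
  imports Main "HOL-Library.Equipollence"
begin

(* Letters are subsets of the finite set of atomic propositions 'ap;
   traces (elements of Sigma^+) are nonempty lists of letters. *)
type_synonym 'ap letter = "'ap set"
type_synonym 'ap trace = "'ap set list"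

datatype 'ap literal = Pos 'ap | Neg 'ap

fun holds_lit :: "'ap literal \<Rightarrow> 'ap letter \<Rightarrow> bool" where
  "holds_lit (Pos p) w = (p \<in> w)"
| "holds_lit (Neg p) w = (p \<notin> w)"

definition models_lit :: "'ap trace set \<Rightarrow> 'ap literal \<Rightarrow> bool" where
  "models_lit A \<alpha> = (\<forall>\<sigma>\<in>A. holds_lit \<alpha> (hd \<sigma>))"

definition refutes_lit :: "'ap trace set \<Rightarrow> 'ap literal \<Rightarrow> bool" where
  "refutes_lit B \<alpha> = (\<forall>\<sigma>\<in>B. \<not> holds_lit \<alpha> (hd \<sigma>))"

definition setX :: "'ap trace set \<Rightarrow> 'ap trace set" where
  "setX A = {drop 1 \<sigma> | \<sigma>. \<sigma> \<in> A \<and> length \<sigma> \<ge> 2}"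

definition setG :: "'ap trace set \<Rightarrow> 'ap trace set" where
  "setG A = {drop j \<sigma> | \<sigma> j. \<sigma> \<in> A \<and> j < length \<sigma>}"

definition future_point :: "'ap trace set \<Rightarrow> ('ap trace \<Rightarrow> nat) \<Rightarrow> bool" where
  "future_point A f = (\<forall>\<sigma>\<in>A. f \<sigma> < length \<sigma>)"

definition setF :: "'ap trace set \<Rightarrow> ('ap trace \<Rightarrow> nat) \<Rightarrow> 'ap trace set" where
  "setF A f = {drop (f \<sigma>) \<sigma> | \<sigma>. \<sigma> \<in> A}"

(* deduct A B n : there is a deduction tree for <A,B> of size n
   (size = number of rule applications). |A^X| = |A| is cardinality,
   rendered as equipollence (coincides with card for finite sets). *)
inductive deduct :: "'ap trace set \<Rightarrow> 'ap trace set \<Rightarrow> nat \<Rightarrow> bool" where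
  Atomic: "models_lit A \<alpha> \<Longrightarrow> refutes_lit B \<alpha> \<Longrightarrow> deduct A B 1"
| Or: "deduct A1 B n1 \<Longrightarrow> deduct A2 B n2 \<Longrightarrow> A1 \<inter> A2 = {} \<Longrightarrow>
       deduct (A1 \<union> A2) B (n1 + n2 + 1)"
| And: "deduct A B1 n1 \<Longrightarrow> deduct A B2 n2 \<Longrightarrow> B1 \<inter> B2 = {} \<Longrightarrow>
       deduct A (B1 \<union> B2) (n1 + n2 + 1)"
| Next: "deduct (setX A) (setX B) n \<Longrightarrow> setX A \<approx> A \<Longrightarrow> deduct A B (n + 1)"
| WeakNext: "deduct (setX A) (setX B) n \<Longrightarrow> setX B \<approx> B \<Longrightarrow> deduct A B (n + 1)"
| Future: "future_point A f \<Longrightarrow> deduct (setF A f) (setG B) n \<Longrightarrow> deduct A B (n + 1)"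
| Globally: "future_point B f \<Longrightarrow> deduct (setG A) (setF B f) n \<Longrightarrow> deduct A B (n + 1)"

end

(* A derivable term <A, B> of finite sets has A and B disjoint: every rule maps a
   trace common to both sides to a trace common to both sides of its premise.
   Now induct over a deduction tree for <A, B> with u^i sigma in A and u^j sigma
   in B. An Atomic leaf needs min i j = 0, since otherwise both traces start with
   u. Next and WeakNext strip one u from each trace. Future sends u^i sigma to one
   of its suffixes; by disjointness of the premise this suffix cannot be a suffix
   of u^j sigma, so it is u^i' sigma with i' > j and min is not decreased
   (Globally symmetrically). So along the branch that follows the two traces,
   each rule lowers min i j by at most one before an Atomic leaf is reached. *)

theory Submission
  imports Defs
begin

lemma setX_eq_image: "setX A = drop 1 ` {\<sigma> \<in> A. 2 \<le> length \<sigma>}"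
  unfolding setX_def by auto

lemma setF_eq_image: "setF A f = (\<lambda>\<sigma>. drop (f \<sigma>) \<sigma>) ` A"
  unfolding setF_def by auto

lemma setG_eq_UN: "setG A = (\<Union>\<sigma>\<in>A. (\<lambda>k. drop k \<sigma>) ` {..<length \<sigma>})"
  unfolding setG_def by auto

lemma finite_setX: "finite A \<Longrightarrow> finite (setX A)"
  by (simp add: setX_eq_image)

lemma finite_setF: "finite A \<Longrightarrow> finite (setF A f)"
  by (simp add: setF_eq_image)

lemma finite_setG: "finite A \<Longrightarrow> finite (setG A)"
  by (simp add: setG_eq_UN)

lemma drop_mem_setX: "\<sigma> \<in> A \<Longrightarrow> 2 \<le> length \<sigma> \<Longrightarrow> drop 1 \<sigma> \<in> setX A"
  unfolding setX_def by blast

lemma Cons_mem_setX: "w # \<tau> \<in> A \<Longrightarrow> \<tau> \<noteq> [] \<Longrightarrow> \<tau> \<in> setX A"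
  using drop_mem_setX[of "w # \<tau>"] by (simp add: Suc_le_eq)

lemma drop_mem_setG: "\<sigma> \<in> A \<Longrightarrow> k < length \<sigma> \<Longrightarrow> drop k \<sigma> \<in> setG A"
  unfolding setG_def by blast

lemma drop_mem_setF: "\<sigma> \<in> A \<Longrightarrow> drop (f \<sigma>) \<sigma> \<in> setF A f"
  unfolding setF_def by blast

lemma length_ge_2_if_setX_eqpoll:
  assumes "finite A" and "setX A \<approx> A" and "\<sigma> \<in> A"
  shows "2 \<le> length \<sigma>"
proof (rule ccontr)
  assume short: "\<not> 2 \<le> length \<sigma>"
  let ?long = "{\<tau> \<in> A. 2 \<le> length \<tau>}"
  have "card A = card (setX A)"
    using assms(1,2) by (simp add: eqpoll_iff_card finite_setX)
  also have "\<dots> \<le> card ?long"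
    unfolding setX_eq_image using assms(1) by (simp add: card_image_le)
  also have "\<dots> < card A"
    using assms(1,3) short by (intro psubset_card_mono) auto
  finally show False by simp
qed

lemma deduct_disjoint:
  assumes "deduct A B n" and "finite A" and "finite B"
  shows "A \<inter> B = {}"
  using assms
proof (induction rule: deduct.induct)
  case (Atomic A \<alpha> B)
  then show ?case unfolding models_lit_def refutes_lit_def by auto
next
  case (Or A1 B n1 A2 n2)
  then show ?case by auto
next
  case (And A B1 n1 B2 n2)
  then show ?case by auto
next
  case (Next A B n)
  then have "setX A \<inter> setX B = {}" by (simp add: finite_setX)
  with Next show ?case by (blast dest: length_ge_2_if_setX_eqpoll drop_mem_setX)
next
  case (WeakNext A B n)
  then have "setX A \<inter> setX B = {}" by (simp add: finite_setX)
  with WeakNext show ?case by (blast dest: length_ge_2_if_setX_eqpoll drop_mem_setX)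
next
  case (Future A f B n)
  then have "setF A f \<inter> setG B = {}" by (simp add: finite_setF finite_setG)
  with Future show ?case unfolding future_point_def by (blast dest: drop_mem_setF drop_mem_setG)
next
  case (Globally B f A n)
  then have "setG A \<inter> setF B f = {}" by (simp add: finite_setF finite_setG)
  with Globally show ?case unfolding future_point_def by (blast dest: drop_mem_setF drop_mem_setG)
qed

lemma drop_replicate_append_eq_drop:
  assumes "\<sigma> \<noteq> []" and "k < i + length \<sigma>" and "i - k \<le> j"
  obtains m where "m < j + length \<sigma>"
    and "drop k (replicate i u @ \<sigma>) = drop m (replicate j u @ \<sigma>)"
proof (cases "k \<le> i")
  case True
  have "j - (i - k) < j + length \<sigma>"
    using assms(1) by (cases \<sigma>) auto
  moreover have "drop k (replicate i u @ \<sigma>) = drop (j - (i - k)) (replicate j u @ \<sigma>)"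
    using True assms(3) by simp
  ultimately show ?thesis by (rule that)
next
  case False
  have "k - i + j < j + length \<sigma>"
    using assms(2) False by simp
  moreover have "drop k (replicate i u @ \<sigma>) = drop (k - i + j) (replicate j u @ \<sigma>)"
    using False by simp
  ultimately show ?thesis by (rule that)
qed

lemma setF_mem_longer_replicate:
  assumes "\<sigma> \<noteq> []" and "future_point A f"
    and "replicate i u @ \<sigma> \<in> A" and "replicate j u @ \<sigma> \<in> B"
    and "setF A f \<inter> setG B = {}"
  obtains i' where "j < i'" and "replicate i' u @ \<sigma> \<in> setF A f"
proof -
  let ?a = "replicate i u @ \<sigma>" and ?k = "f (replicate i u @ \<sigma>)"
  have landing: "drop ?k ?a \<in> setF A f"
    using assms(3) by (rule drop_mem_setF)
  have "\<not> i - ?k \<le> j"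
  proof
    assume "i - ?k \<le> j"
    moreover have "?k < i + length \<sigma>"
      using assms(2,3) unfolding future_point_def by fastforce
    ultimately obtain m where m_bound: "m < length (replicate j u @ \<sigma>)"
      and same_suffix: "drop ?k ?a = drop m (replicate j u @ \<sigma>)"
      using assms(1) drop_replicate_append_eq_drop by (metis length_append length_replicate)
    have "drop ?k ?a \<in> setG B"
      unfolding same_suffix using assms(4) m_bound by (rule drop_mem_setG)
    with landing assms(5) show False by blast
  qed
  then have "drop ?k ?a = replicate (i - ?k) u @ \<sigma>" and "j < i - ?k"
    by simp_all
  with landing show ?thesis by (intro that) auto
qed

lemma deduct_replicate_append_size:
  assumes "deduct A B n" and "finite A" and "finite B" and "\<sigma> \<noteq> []"
    and "replicate i u @ \<sigma> \<in> A" and "replicate j u @ \<sigma> \<in> B"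
  shows "min i j + 1 \<le> n"
  using assms
proof (induction arbitrary: i j rule: deduct.induct)
  case (Atomic A \<alpha> B)
  then show ?case unfolding models_lit_def refutes_lit_def
    by (cases i; cases j; fastforce)
next
  case (Or A1 B n1 A2 n2)
  then show ?case by fastforce
next
  case (And A B1 n1 B2 n2)
  then show ?case by fastforce
next
  case (Next A B n)
  show ?case
  proof (cases i; cases j)
    fix i' j' assume "i = Suc i'" and "j = Suc j'"
    with Next have "min i' j' + 1 \<le> n"
      by (intro Next.IH) (simp_all add: finite_setX Cons_mem_setX)
    with \<open>i = Suc i'\<close> \<open>j = Suc j'\<close> show ?thesis by simp
  qed simp_all
next
  case (WeakNext A B n)
  show ?case
  proof (cases i; cases j)
    fix i' j' assume "i = Suc i'" and "j = Suc j'"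
    with WeakNext have "min i' j' + 1 \<le> n"
      by (intro WeakNext.IH) (simp_all add: finite_setX Cons_mem_setX)
    with \<open>i = Suc i'\<close> \<open>j = Suc j'\<close> show ?thesis by simp
  qed simp_all
next
  case (Future A f B n)
  have "setF A f \<inter> setG B = {}"
    using Future by (intro deduct_disjoint) (simp_all add: finite_setF finite_setG)
  with Future obtain i' where "j < i'" and "replicate i' u @ \<sigma> \<in> setF A f"
    by (elim setF_mem_longer_replicate)
  moreover have "replicate j u @ \<sigma> \<in> setG B"
    using Future by (intro drop_mem_setG[where k = 0, simplified]) simp_all
  ultimately have "min i' j + 1 \<le> n"
    using Future by (intro Future.IH) (simp_all add: finite_setF finite_setG)
  with \<open>j < i'\<close> show ?case by simp
next
  case (Globally B f A n)
  have "setF B f \<inter> setG A = {}"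
    using Globally by (subst Int_commute, intro deduct_disjoint) (simp_all add: finite_setF finite_setG)
  with Globally obtain j' where "i < j'" and "replicate j' u @ \<sigma> \<in> setF B f"
    by (elim setF_mem_longer_replicate)
  moreover have "replicate i u @ \<sigma> \<in> setG A"
    using Globally by (intro drop_mem_setG[where k = 0, simplified]) simp_all
  ultimately have "min i j' + 1 \<le> n"
    using Globally by (intro Globally.IH) (simp_all add: finite_setF finite_setG)
  with \<open>i < j'\<close> show ?case by simp
qed

theorem lemma11:
  fixes u :: "'ap::finite set" and \<sigma> :: "'ap set list" and i j n :: nat
  assumes "\<sigma> \<noteq> []"
    and "u \<noteq> hd \<sigma>"
    and "deduct {replicate i u @ \<sigma>} {replicate j u @ \<sigma>} n"
  shows "n \<ge> min i j + 1"
  using deduct_replicate_append_size[OF assms(3) _ _ assms(1), where u = u] by simp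

end
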